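(* Let $r=\max\{\eta_a,\eta_b\}$, $\alpha=\max\{\sigma_{\max}(U):U\in B(V_*,r)\}$, $L=6\alpha^2\max\{|\lambda_1|,|\lambda_{\max}|\}$ and $\hat L=\frac{2L}{3\alpha}$. Then for all $U_i,U_j\in B(V_*,r)$, $$\|\mathcal{A}_{U_i}U_i-\mathcal{A}_{U_j}U_j\|\leqslant L\|U_i-U_j\|,\qquad \|\mathcal{A}_{U_i}-\mathcal{A}_{U_j}\|\leqslant\hat L\|U_i-U_j\|.$$
   Context: Let $\mathcal{V}^{N_g}$ be a real Hilbert space of finite dimension $N_g$ with inner product $(\cdot,\cdot)$, and let $H:\mathcal{V}^{N_g}\to\mathcal{V}^{N_g}$ be a self-adjoint linear operator with eigenvalues $\lambda_1\leqslant\cdots\leqslant\lambda_{N_g}$, $\lambda_{\max}=\lambda_{N_g}$, $\lambda_1<0$. Fix $N<N_g$ with $\lambda_N<\lambda_{N+1}$. Elements of $(\mathcal{V}^{N_g})^N$ are written $U=(u_1,\dots,u_N)$; $U^\top V=((u_i,v_j))_{i,j=1}^N$; for a real $N\times N$ matrix $A=(a_{kj})$, $UA$ has $j$-th component $\sum_k a_{kj}u_k$; $HU=(Hu_1,\dots,Hu_N)$; $\|U\|=\operatorname{tr}(U^\top U)^{1/2}$; $\sigma_{\max}(U)=\sqrt{\lambda_{\max}(U^\top U)}$. Set $\nabla E(U)=HU$. For $U$, $\mathcal{A}_U=\nabla E(U)U^\top-U\nabla E(U)^\top$ is the linear operator on $\mathcal{V}^{N_g}$ given by $\mathcal{A}_Uw=\sum_{i=1}^N\big(Hu_i\,(u_i,w)-u_i\,(Hu_i,w)\big)$,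 applied componentwise to elements of $(\mathcal{V}^{N_g})^N$; for linear operators on $\mathcal{V}^{N_g}$, $\|\cdot\|$ is the Hilbert–Schmidt norm (so $\|\mathcal{A}_U\|^2=-\operatorname{tr}(\mathcal{A}_U^2)$). Let $V_*$ satisfy $V_*^\top V_*=I_N$, $HV_*=V_*\operatorname{diag}(\lambda_1,\dots,\lambda_N)$. $\mathcal{O}^N$ denotes the $N\times N$ orthogonal matrices, $\operatorname{dist}([U],[V_*])=\inf_{Q\in\mathcal{O}^N}\|UQ-V_*\|$, $B(U,\eta)=\{W:\|W-U\|\leqslant\eta\}$, $B([V_*],\eta)=\{W:\operatorname{dist}([W],[V_*])\leqslant\eta\}$. Fix constants $\eta_a,\eta_b,\delta^*>0$ such that (as asserted in the paper) there is a unique function $\hat g:B(V_*,\eta_a)\times[0,\delta^*]\to B(V_*,\eta_b)$ with $\hat g(U,s)-U=-s\,\mathcal{A}_{\frac{\hat g(U,s)+U}{2}}\frac{\hat g(U,s)+U}{2}$, and a unique function $g:B([V_*],\eta_a)\times[0,\delta^*]\to B([V_*],\eta_b)$ with $g(U,s)=\hat g(U,s)-s\nabla E(\hat g(U,s))(I_N-\hat g(U,s)^\top\hat g(U,s))$. *)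

theory Defs
  imports "HOL-Analysis.Analysis"
begin

text \<open>Elements of (V^{N_g})^N are represented as functions nat => 'v; only the
components with index < N matter.\<close>

definition tnorm :: "nat \<Rightarrow> (nat \<Rightarrow> 'v::euclidean_space) \<Rightarrow> real" where
  "tnorm N U = sqrt (\<Sum>i<N. (norm (U i))\<^sup>2)"

definition gram :: "(nat \<Rightarrow> 'v::euclidean_space) \<Rightarrow> nat \<Rightarrow> nat \<Rightarrow> real" where
  "gram U i j = U i \<bullet> U j"

definition mat_lambda_max :: "nat \<Rightarrow> (nat \<Rightarrow> nat \<Rightarrow> real) \<Rightarrow> real" where
  "mat_lambda_max N G = Max {\<mu>. \<exists>x::nat \<Rightarrow> real. (\<exists>k<N. x k \<noteq> 0) \<and>
      (\<forall>i<N. (\<Sum>j<N. G i j * x j) = \<mu> * x i)}"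

definition sigma_max :: "nat \<Rightarrow> (nat \<Rightarrow> 'v::euclidean_space) \<Rightarrow> real" where
  "sigma_max N U = sqrt (mat_lambda_max N (gram U))"

definition opA :: "('v::euclidean_space \<Rightarrow> 'v) \<Rightarrow> nat \<Rightarrow> (nat \<Rightarrow> 'v) \<Rightarrow> 'v \<Rightarrow> 'v" where
  "opA H N U w = (\<Sum>i<N. (U i \<bullet> w) *\<^sub>R H (U i) - (H (U i) \<bullet> w) *\<^sub>R U i)"

definition hs_norm :: "('v::euclidean_space \<Rightarrow> 'v) \<Rightarrow> real" where
  "hs_norm A = sqrt (\<Sum>b\<in>Basis. (norm (A b))\<^sup>2)"

end

theory Submission
  imports Defs
begin

(*
  Write S_U = U U^T, so that A_U = H S_U - S_U H, and let M = max(|lambda_1|, |lambda_max|),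
  which bounds the operator norm of H.  On the ball B(V_*, r) the synthesis map c |-> sum_i c_i u_i
  and its adjoint w |-> ((u_i, w))_i both have norm at most alpha, because sigma_max(U) bounds
  them: the maximum mu of sum_i (u_i, w)^2 over unit vectors w is an eigenvalue of the Gram
  matrix U^T U.  With D = U_i - U_j one has S_{U_i} - S_{U_j} = U_i D^T + D U_j^T, whose
  Hilbert-Schmidt norm is at most 2 alpha ||D||; hence ||A_{U_i} - A_{U_j}|| <= 4 M alpha ||D||,
  which is Lhat ||D||.  For the first estimate split
  A_{U_i} U_i - A_{U_j} U_j = (A_{U_i} - A_{U_j}) U_i + A_{U_j} D and use ||A_{U_j}|| <= 2 M alpha^2,
  giving (4 + 2) M alpha^2 ||D|| = L ||D||.
*)

section \<open>Hilbert--Schmidt norms\<close>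

lemma norm_sq_eq_sum_Basis: "(norm x)\<^sup>2 = (\<Sum>b\<in>Basis. (x \<bullet> b)\<^sup>2)"
  for x :: "'a::euclidean_space"
  unfolding power2_norm_eq_inner by (simp add: euclidean_inner[of x x] power2_eq_square)

lemma tnorm_eq_L2_set: "tnorm N U = L2_set (\<lambda>k. norm (U k)) {..<N}"
  by (simp add: tnorm_def L2_set_def)

lemma hs_norm_eq_L2_set: "hs_norm A = L2_set (\<lambda>b. norm (A b)) Basis"
  by (simp add: hs_norm_def L2_set_def)

lemma L2_set_norm_add_le:
  "L2_set (\<lambda>k. norm (X k + Y k)) K \<le> L2_set (\<lambda>k. norm (X k)) K + L2_set (\<lambda>k. norm (Y k)) K"
  by (rule order_trans[OF L2_set_mono L2_set_triangle_ineq]) (simp_all add: norm_triangle_ineq)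

lemma L2_set_norm_diff_le:
  "L2_set (\<lambda>k. norm (X k - Y k)) K \<le> L2_set (\<lambda>k. norm (X k)) K + L2_set (\<lambda>k. norm (Y k)) K"
  using L2_set_norm_add_le[of X "\<lambda>k. - Y k" K] by simp

lemma L2_set_norm_le_scaled:
  assumes "\<And>k. k \<in> K \<Longrightarrow> norm (X k) \<le> m * f k" "0 \<le> m"
  shows "L2_set (\<lambda>k. norm (X k)) K \<le> m * L2_set f K"
  using L2_set_mono[of K "\<lambda>k. norm (X k)" "\<lambda>k. m * f k"] assms
  by (simp add: L2_set_right_distrib)

lemma hs_norm_add_le: "hs_norm (\<lambda>w. A w + B w) \<le> hs_norm A + hs_norm B"
  unfolding hs_norm_eq_L2_set by (rule L2_set_norm_add_le)

lemma hs_norm_diff_le: "hs_norm (\<lambda>w. A w - B w) \<le> hs_norm A + hs_norm B"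
  unfolding hs_norm_eq_L2_set by (rule L2_set_norm_diff_le)

lemma tnorm_add_le: "tnorm N (\<lambda>k. X k + Y k) \<le> tnorm N X + tnorm N Y"
  unfolding tnorm_eq_L2_set by (rule L2_set_norm_add_le)

lemma hs_norm_adjoint:
  fixes A :: "'v::euclidean_space \<Rightarrow> 'v"
  assumes "linear A"
  shows "hs_norm (adjoint A) = hs_norm A"
proof -
  have "(\<Sum>b\<in>Basis. (norm (adjoint A b))\<^sup>2) = (\<Sum>b\<in>Basis. \<Sum>c\<in>Basis. (A c \<bullet> b)\<^sup>2)"
    by (simp add: norm_sq_eq_sum_Basis adjoint_clauses[OF assms] inner_commute)
  also have "\<dots> = (\<Sum>c\<in>Basis. \<Sum>b\<in>Basis. (A c \<bullet> b)\<^sup>2)"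
    by (rule sum.swap)
  also have "\<dots> = (\<Sum>c\<in>Basis. (norm (A c))\<^sup>2)"
    by (simp add: norm_sq_eq_sum_Basis)
  finally show ?thesis by (simp add: hs_norm_def)
qed

lemma hs_norm_comp_left:
  assumes "\<And>x. norm (G x) \<le> m * norm x" "0 \<le> m"
  shows "hs_norm (\<lambda>w. G (A w)) \<le> m * hs_norm A"
  unfolding hs_norm_eq_L2_set by (rule L2_set_norm_le_scaled) (simp_all add: assms)

lemma hs_norm_comp_right:
  fixes A G :: "'v::euclidean_space \<Rightarrow> 'v"
  assumes "linear A" "linear G" "\<And>x y. G x \<bullet> y = x \<bullet> G y"
    and "\<And>x. norm (G x) \<le> m * norm x" "0 \<le> m"
  shows "hs_norm (\<lambda>w. A (G w)) \<le> m * hs_norm A"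
proof -
  have "adjoint (\<lambda>w. A (G w)) = (\<lambda>w. G (adjoint A w))"
    by (rule adjoint_unique) (simp add: adjoint_works[OF assms(1), symmetric] assms(3))
  moreover have "linear (\<lambda>w. A (G w))"
    using linear_compose[OF assms(2,1)] by (simp add: o_def)
  ultimately have "hs_norm (\<lambda>w. A (G w)) = hs_norm (\<lambda>w. G (adjoint A w))"
    by (metis hs_norm_adjoint)
  also have "\<dots> \<le> m * hs_norm (adjoint A)"
    by (rule hs_norm_comp_left) (simp_all add: assms)
  finally show ?thesis
    by (simp only: hs_norm_adjoint[OF assms(1)])
qed

section \<open>Synthesis bounds and outer sums\<close>

definition synthesis_bound :: "nat \<Rightarrow> (nat \<Rightarrow> 'v::real_normed_vector) \<Rightarrow> real \<Rightarrow> bool" where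
  "synthesis_bound N U s \<longleftrightarrow> (\<forall>c. norm (\<Sum>i<N. c i *\<^sub>R U i) \<le> s * L2_set c {..<N})"

lemma synthesis_bound_mono: "synthesis_bound N U s \<Longrightarrow> s \<le> t \<Longrightarrow> synthesis_bound N U t"
  unfolding synthesis_bound_def by (meson order_trans mult_right_mono L2_set_nonneg)

lemma le_of_square_le_mult:
  fixes q s t :: real
  assumes "q\<^sup>2 \<le> s * q * t" "0 \<le> q" "0 \<le> s" "0 \<le> t"
  shows "q \<le> s * t"
proof (cases "q = 0")
  case False
  with assms show ?thesis by (simp add: power2_eq_square mult.commute mult.left_commute)
qed (use assms in simp)

lemma synthesis_bound_iff_analysis_bound:
  fixes U :: "nat \<Rightarrow> 'v::real_inner"
  assumes "0 \<le> s"
  shows "synthesis_bound N U s \<longleftrightarrow> (\<forall>v. L2_set (\<lambda>i. U i \<bullet> v) {..<N} \<le> s * norm v)"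
proof
  assume bound: "synthesis_bound N U s"
  show "\<forall>v. L2_set (\<lambda>i. U i \<bullet> v) {..<N} \<le> s * norm v"
  proof
    fix v
    define q where "q = L2_set (\<lambda>i. U i \<bullet> v) {..<N}"
    have "q\<^sup>2 = (\<Sum>i<N. (U i \<bullet> v) *\<^sub>R U i) \<bullet> v"
      by (simp add: q_def L2_set_def sum_nonneg inner_sum_left power2_eq_square)
    also have "\<dots> \<le> norm (\<Sum>i<N. (U i \<bullet> v) *\<^sub>R U i) * norm v"
      by (rule norm_cauchy_schwarz)
    also have "\<dots> \<le> s * q * norm v"
      using bound by (simp add: synthesis_bound_def q_def mult_right_mono)
    finally show "q \<le> s * norm v"
      by (rule le_of_square_le_mult) (simp_all add: q_def assms)
  qed
next
  assume bound: "\<forall>v. L2_set (\<lambda>i. U i \<bullet> v) {..<N} \<le> s * norm v"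
  show "synthesis_bound N U s"
    unfolding synthesis_bound_def
  proof
    fix c
    define z where "z = (\<Sum>i<N. c i *\<^sub>R U i)"
    have "(norm z)\<^sup>2 = (\<Sum>i<N. c i * (U i \<bullet> z))"
      by (simp add: z_def power2_norm_eq_inner inner_sum_left)
    also have "\<dots> \<le> (\<Sum>i<N. \<bar>c i\<bar> * \<bar>U i \<bullet> z\<bar>)"
      by (rule sum_mono) (simp add: abs_mult[symmetric])
    also have "\<dots> \<le> L2_set c {..<N} * L2_set (\<lambda>i. U i \<bullet> z) {..<N}"
      by (rule L2_set_mult_ineq)
    also have "\<dots> \<le> L2_set c {..<N} * (s * norm z)"
      using bound by (simp add: mult_left_mono)
    finally have "(norm z)\<^sup>2 \<le> s * norm z * L2_set c {..<N}"
      by (simp add: mult_ac)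
    then show "norm z \<le> s * L2_set c {..<N}"
      by (rule le_of_square_le_mult) (simp_all add: assms)
  qed
qed

lemma L2_set_L2_set_inner_Basis:
  fixes X :: "nat \<Rightarrow> 'v::euclidean_space"
  assumes "finite I"
  shows "L2_set (\<lambda>b. L2_set (\<lambda>i. X i \<bullet> b) I) Basis = L2_set (\<lambda>i. norm (X i)) I"
proof -
  have "(\<Sum>b\<in>Basis. \<Sum>i\<in>I. (X i \<bullet> b)\<^sup>2) = (\<Sum>i\<in>I. \<Sum>b\<in>Basis. (X i \<bullet> b)\<^sup>2)"
    by (rule sum.swap)
  then show ?thesis
    by (simp add: L2_set_def sum_nonneg norm_sq_eq_sum_Basis)
qed

lemma tnorm_map_le:
  assumes "\<And>x. norm (B x) \<le> m * norm x" "0 \<le> m"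
  shows "tnorm N (\<lambda>k. B (D k)) \<le> m * tnorm N D"
  unfolding tnorm_eq_L2_set by (rule L2_set_norm_le_scaled) (simp_all add: assms)

lemma tnorm_map_le_hs_norm:
  fixes B :: "'v::euclidean_space \<Rightarrow> 'v"
  assumes "linear B" "synthesis_bound N U s" "0 \<le> s"
  shows "tnorm N (\<lambda>k. B (U k)) \<le> s * hs_norm B"
proof -
  have "tnorm N (\<lambda>k. B (U k)) = L2_set (\<lambda>b. L2_set (\<lambda>k. U k \<bullet> adjoint B b) {..<N}) Basis"
    by (simp add: tnorm_eq_L2_set L2_set_L2_set_inner_Basis[symmetric] adjoint_works[OF assms(1)])
  also have "\<dots> \<le> L2_set (\<lambda>b. s * norm (adjoint B b)) Basis"
    using assms(2,3) by (intro L2_set_mono) (simp_all add: synthesis_bound_iff_analysis_bound)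
  also have "\<dots> = s * hs_norm (adjoint B)"
    by (simp add: L2_set_right_distrib assms(3) hs_norm_eq_L2_set)
  finally show ?thesis
    by (simp only: hs_norm_adjoint[OF assms(1)])
qed

(* outer_sum N X Y is the operator Y X^T, so that A_U = H (U U^T) - (U U^T) H. *)
definition outer_sum :: "nat \<Rightarrow> (nat \<Rightarrow> 'v::real_inner) \<Rightarrow> (nat \<Rightarrow> 'v) \<Rightarrow> 'v \<Rightarrow> 'v" where
  "outer_sum N X Y w = (\<Sum>i<N. (X i \<bullet> w) *\<^sub>R Y i)"

lemma linear_outer_sum: "linear (outer_sum N X Y)"
  by (rule linearI)
    (simp_all add: outer_sum_def inner_add_right sum.distrib scaleR_add_left scaleR_sum_right)

lemma outer_sum_inner: "outer_sum N X Y x \<bullet> y = x \<bullet> outer_sum N Y X y"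
  by (simp add: outer_sum_def inner_sum_left inner_sum_right inner_commute mult.commute)

lemma adjoint_outer_sum: "adjoint (outer_sum N X Y) = outer_sum N Y X"
  by (rule adjoint_unique) (simp add: outer_sum_inner)

lemma outer_sum_diff:
  "outer_sum N X X w - outer_sum N Y Y w
     = outer_sum N (\<lambda>i. X i - Y i) X w + outer_sum N Y (\<lambda>i. X i - Y i) w"
  by (simp add: outer_sum_def sum_subtractf[symmetric] sum.distrib[symmetric]
      inner_diff_left scaleR_diff_left scaleR_diff_right)

lemma outer_sum_self_inner: "outer_sum N U U v \<bullet> v = (\<Sum>i<N. (U i \<bullet> v)\<^sup>2)"
  by (simp add: outer_sum_def inner_sum_left power2_eq_square)

lemma norm_outer_sum_self_le:
  assumes "synthesis_bound N U s" "0 \<le> s"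
  shows "norm (outer_sum N U U x) \<le> s\<^sup>2 * norm x"
proof -
  have "norm (outer_sum N U U x) \<le> s * L2_set (\<lambda>i. U i \<bullet> x) {..<N}"
    using assms(1) by (simp add: outer_sum_def synthesis_bound_def)
  also have "\<dots> \<le> s * (s * norm x)"
    using assms by (intro mult_left_mono) (simp_all add: synthesis_bound_iff_analysis_bound)
  finally show ?thesis by (simp add: power2_eq_square)
qed

lemma hs_norm_outer_sum_le:
  fixes X Y :: "nat \<Rightarrow> 'v::euclidean_space"
  assumes "synthesis_bound N Y s" "0 \<le> s"
  shows "hs_norm (outer_sum N X Y) \<le> s * tnorm N X"
proof -
  have "hs_norm (outer_sum N X Y) \<le> s * L2_set (\<lambda>b. L2_set (\<lambda>i. X i \<bullet> b) {..<N}) Basis"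
    unfolding hs_norm_eq_L2_set
    using assms by (intro L2_set_norm_le_scaled) (simp_all add: synthesis_bound_def outer_sum_def)
  then show ?thesis by (simp add: L2_set_L2_set_inner_Basis tnorm_eq_L2_set)
qed

lemma hs_norm_outer_sum_le_swap:
  fixes X Y :: "nat \<Rightarrow> 'v::euclidean_space"
  assumes "synthesis_bound N X s" "0 \<le> s"
  shows "hs_norm (outer_sum N X Y) \<le> s * tnorm N Y"
  using hs_norm_outer_sum_le[OF assms, of Y] hs_norm_adjoint[OF linear_outer_sum, of N X Y]
  by (simp add: adjoint_outer_sum)

section \<open>Self-adjoint operators\<close>

lemma sum_inner_sq_orthonormal:
  fixes e :: "nat \<Rightarrow> 'a::euclidean_space"
  assumes orthonormal: "\<And>i j. i < DIM('a) \<Longrightarrow> j < DIM('a) \<Longrightarrow> e i \<bullet> e j = (if i = j then 1 else 0)"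
  shows "(\<Sum>i<DIM('a). (x \<bullet> e i)\<^sup>2) = (norm x)\<^sup>2"
proof -
  define B where "B = e ` {..<DIM('a)}"
  have inj: "inj_on e {..<DIM('a)}"
    by (rule inj_onI) (metis lessThan_iff orthonormal zero_neq_one)
  have orthogonal: "pairwise orthogonal B"
    unfolding B_def pairwise_def orthogonal_def using orthonormal by auto
  have unit: "norm b = 1" if "b \<in> B" for b
    using that orthonormal by (auto simp: B_def norm_eq_sqrt_inner)
  have "finite B"
    by (simp add: B_def)
  have "independent B"
    using pairwise_orthogonal_independent[OF orthogonal] unit by force
  moreover have "card B = dim (UNIV :: 'a set)"
    using inj by (simp add: B_def card_image)
  ultimately have "UNIV \<subseteq> span B"
    using card_eq_dim[of B UNIV] \<open>finite B\<close> by blast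
  then have expand: "(\<Sum>b\<in>B. (x \<bullet> b) *\<^sub>R b) = x"
    using orthonormal_basis_expand[OF orthogonal unit _ \<open>finite B\<close>] by blast
  have "(norm x)\<^sup>2 = x \<bullet> (\<Sum>b\<in>B. (x \<bullet> b) *\<^sub>R b)"
    by (simp only: expand power2_norm_eq_inner)
  also have "\<dots> = (\<Sum>b\<in>B. (x \<bullet> b)\<^sup>2)"
    by (simp add: inner_sum_right power2_eq_square)
  finally have "(norm x)\<^sup>2 = (\<Sum>b\<in>B. (x \<bullet> b)\<^sup>2)" .
  then show ?thesis
    using sum.reindex[OF inj, of "\<lambda>b. (x \<bullet> b)\<^sup>2"] by (simp add: B_def)
qed

lemma norm_le_of_orthonormal_eigenbasis:
  fixes H :: "'a::euclidean_space \<Rightarrow> 'a"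
  assumes orthonormal: "\<And>i j. i < DIM('a) \<Longrightarrow> j < DIM('a) \<Longrightarrow> e i \<bullet> e j = (if i = j then 1 else 0)"
    and selfadjoint: "\<And>x y. H x \<bullet> y = x \<bullet> H y"
    and eigen: "\<And>i. i < DIM('a) \<Longrightarrow> H (e i) = lam i *\<^sub>R e i"
    and bound: "\<And>i. i < DIM('a) \<Longrightarrow> \<bar>lam i\<bar> \<le> m"
  shows "norm (H x) \<le> m * norm x"
proof -
  have "0 \<le> m"
    using bound[of 0] by simp
  have "(norm (H x))\<^sup>2 = (\<Sum>i<DIM('a). (lam i * (x \<bullet> e i))\<^sup>2)"
    by (simp add: sum_inner_sq_orthonormal[OF orthonormal, symmetric] selfadjoint eigen)
  also have "\<dots> \<le> (\<Sum>i<DIM('a). m\<^sup>2 * (x \<bullet> e i)\<^sup>2)"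
  proof (rule sum_mono)
    fix i assume "i \<in> {..<DIM('a)}"
    then have "(lam i)\<^sup>2 \<le> m\<^sup>2"
      using bound \<open>0 \<le> m\<close> by (simp add: abs_le_square_iff[symmetric])
    then show "(lam i * (x \<bullet> e i))\<^sup>2 \<le> m\<^sup>2 * (x \<bullet> e i)\<^sup>2"
      by (simp add: power_mult_distrib mult_right_mono)
  qed
  also have "\<dots> = (m * norm x)\<^sup>2"
    by (simp add: sum_distrib_left[symmetric] sum_inner_sq_orthonormal[OF orthonormal] power_mult_distrib)
  finally show ?thesis
    by (rule power2_le_imp_le) (simp add: \<open>0 \<le> m\<close>)
qed

lemma norm_le_max_abs_extreme_eigenvalue:
  fixes H :: "'a::euclidean_space \<Rightarrow> 'a"
  assumes orthonormal: "\<And>i j. i < DIM('a) \<Longrightarrow> j < DIM('a) \<Longrightarrow> e i \<bullet> e j = (if i = j then 1 else 0)"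
    and selfadjoint: "\<And>x y. H x \<bullet> y = x \<bullet> H y"
    and eigen: "\<And>i. i < DIM('a) \<Longrightarrow> H (e i) = lam i *\<^sub>R e i"
    and sorted: "\<And>i j. i \<le> j \<Longrightarrow> j < DIM('a) \<Longrightarrow> lam i \<le> lam j"
  shows "norm (H x) \<le> max \<bar>lam 0\<bar> \<bar>lam (DIM('a) - 1)\<bar> * norm x"
proof (rule norm_le_of_orthonormal_eigenbasis[OF orthonormal selfadjoint eigen])
  fix i assume "i < DIM('a)"
  then have "lam 0 \<le> lam i" "lam i \<le> lam (DIM('a) - 1)"
    using sorted by auto
  then show "\<bar>lam i\<bar> \<le> max \<bar>lam 0\<bar> \<bar>lam (DIM('a) - 1)\<bar>"
    by linarith
qed

lemma quadratic_nonneg_imp_linear_coeff_zero: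
  fixes a b :: real
  assumes "\<And>t. 0 \<le> 2 * t * a + t\<^sup>2 * b"
  shows "a = 0"
proof (rule ccontr)
  assume "a \<noteq> 0"
  define c where "c = \<bar>b\<bar> + 1"
  have "c > 0" by (simp add: c_def add_pos_nonneg)
  have "0 \<le> c\<^sup>2 * (2 * (- a / c) * a + (- a / c)\<^sup>2 * b)"
    using assms[of "- a / c"] by simp
  also have "\<dots> = a\<^sup>2 * (b - 2 * c)"
    using \<open>c > 0\<close> by (simp add: field_simps power2_eq_square)
  finally have "0 \<le> a\<^sup>2 * (b - 2 * c)" .
  moreover have "b - 2 * c < 0" by (simp add: c_def abs_if)
  moreover have "0 < a\<^sup>2" using \<open>a \<noteq> 0\<close> by simp
  ultimately show False using mult_pos_neg[of "a\<^sup>2" "b - 2 * c"] by linarith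
qed

lemma eigenvector_of_rayleigh_max:
  fixes f :: "'a::real_inner \<Rightarrow> 'a"
  assumes "linear f" and selfadjoint: "\<And>x y. f x \<bullet> y = x \<bullet> f y"
    and le_max: "\<And>v. f v \<bullet> v \<le> \<mu> * (v \<bullet> v)" and max: "f w \<bullet> w = \<mu> * (w \<bullet> w)"
  shows "f w = \<mu> *\<^sub>R w"
proof -
  define g where "g v = \<mu> *\<^sub>R v - f v" for v
  have g_add: "g (x + y) = g x + g y" and g_scale: "g (t *\<^sub>R x) = t *\<^sub>R g x" for x y t
    by (simp_all add: g_def linear_add[OF \<open>linear f\<close>] linear_scale[OF \<open>linear f\<close>] algebra_simps)
  have g_sym: "g x \<bullet> y = g y \<bullet> x" for x y
    unfolding g_def inner_diff_left inner_scaleR_left using selfadjoint[of x y]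
    by (simp add: inner_commute)
  have g_w: "g w \<bullet> w = 0"
    using max by (simp add: g_def inner_diff_left)
  have "g w \<bullet> v = 0" for v
  proof (rule quadratic_nonneg_imp_linear_coeff_zero)
    fix t
    have "0 \<le> g (w + t *\<^sub>R v) \<bullet> (w + t *\<^sub>R v)"
      using le_max[of "w + t *\<^sub>R v"] by (simp add: g_def inner_diff_left)
    also have "\<dots> = 2 * t * (g w \<bullet> v) + t\<^sup>2 * (g v \<bullet> v)"
      using g_w g_sym[of v w]
      by (simp add: g_add g_scale power2_eq_square algebra_simps)
    finally show "0 \<le> 2 * t * (g w \<bullet> v) + t\<^sup>2 * (g v \<bullet> v)" .
  qed
  then have "g w = 0"
    by (metis inner_eq_zero_iff)
  then show ?thesis by (simp add: g_def)
qed

lemma exists_rayleigh_max: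
  fixes f :: "'a::euclidean_space \<Rightarrow> 'a"
  assumes "linear f"
  obtains w where "norm w = 1" "\<And>v. f v \<bullet> v \<le> (f w \<bullet> w) * (v \<bullet> v)"
proof -
  obtain b :: 'a where "b \<in> Basis"
    using nonempty_Basis by blast
  then have "sphere (0::'a) 1 \<noteq> {}"
    by (metis empty_iff mem_sphere_0 norm_Basis)
  moreover have "continuous_on (sphere 0 1) (\<lambda>v. f v \<bullet> v)"
    using assms by (intro continuous_intros linear_continuous_on) (simp add: linear_conv_bounded_linear)
  ultimately obtain w where "w \<in> sphere 0 1" and max: "\<forall>v \<in> sphere 0 1. f v \<bullet> v \<le> f w \<bullet> w"
    using continuous_attains_sup[OF compact_sphere] by blast
  have "f v \<bullet> v \<le> (f w \<bullet> w) * (v \<bullet> v)" for v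
  proof (cases "v = 0")
    case False
    have "f v \<bullet> v = (norm v)\<^sup>2 * (f (v /\<^sub>R norm v) \<bullet> (v /\<^sub>R norm v))"
      using False by (simp add: linear_scale[OF assms] power2_eq_square field_simps)
    also have "\<dots> \<le> (norm v)\<^sup>2 * (f w \<bullet> w)"
      by (intro mult_left_mono max[rule_format]) (simp_all add: False)
    finally show ?thesis
      by (simp add: power2_norm_eq_inner mult.commute)
  qed (simp add: linear_0[OF assms])
  with \<open>w \<in> sphere 0 1\<close> that show ?thesis
    by simp
qed

lemma inner_eigenvectors_selfadjoint:
  assumes selfadjoint: "\<And>x y. f x \<bullet> y = x \<bullet> f y"
    and "f u = \<mu> *\<^sub>R u" "f v = \<nu> *\<^sub>R v" "\<mu> \<noteq> \<nu>"
  shows "u \<bullet> v = 0"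
proof -
  have "\<mu> * (u \<bullet> v) = f u \<bullet> v"
    by (simp add: assms(2))
  also have "\<dots> = u \<bullet> f v"
    by (rule selfadjoint)
  also have "\<dots> = \<nu> * (u \<bullet> v)"
    by (simp add: assms(3))
  finally show ?thesis
    using \<open>\<mu> \<noteq> \<nu>\<close> by simp
qed

lemma finite_eigenvalues_selfadjoint:
  fixes f :: "'a::euclidean_space \<Rightarrow> 'a"
  assumes selfadjoint: "\<And>x y. f x \<bullet> y = x \<bullet> f y"
  shows "finite {\<mu>. \<exists>w. w \<noteq> 0 \<and> f w = \<mu> *\<^sub>R w}"
proof -
  define Ev where "Ev = {\<mu>. \<exists>w. w \<noteq> 0 \<and> f w = \<mu> *\<^sub>R w}"
  define v where "v \<mu> = (SOME w. w \<noteq> 0 \<and> f w = \<mu> *\<^sub>R w)" for \<mu>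
  have v: "v \<mu> \<noteq> 0" "f (v \<mu>) = \<mu> *\<^sub>R v \<mu>" if "\<mu> \<in> Ev" for \<mu>
    using someI_ex[OF that[unfolded Ev_def mem_Collect_eq]] by (simp_all add: v_def)
  have orthogonal: "v \<mu> \<bullet> v \<nu> = 0" if "\<mu> \<in> Ev" "\<nu> \<in> Ev" "\<mu> \<noteq> \<nu>" for \<mu> \<nu>
    by (rule inner_eigenvectors_selfadjoint[OF selfadjoint v(2)[OF that(1)] v(2)[OF that(2)] that(3)])
  have inj: "inj_on v Ev"
  proof (rule inj_onI, rule ccontr)
    fix \<mu> \<nu> assume "\<mu> \<in> Ev" "\<nu> \<in> Ev" "v \<mu> = v \<nu>" "\<mu> \<noteq> \<nu>"
    then have "v \<mu> \<bullet> v \<mu> = 0"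
      using orthogonal[of \<mu> \<nu>] by simp
    then show False
      using v(1)[OF \<open>\<mu> \<in> Ev\<close>] by simp
  qed
  have "pairwise orthogonal (v ` Ev)"
  proof (rule pairwiseI)
    fix x y assume "x \<in> v ` Ev" "y \<in> v ` Ev" "x \<noteq> y"
    then obtain \<mu> \<nu> where "\<mu> \<in> Ev" "\<nu> \<in> Ev" "x = v \<mu>" "y = v \<nu>" "\<mu> \<noteq> \<nu>"
      by blast
    then show "orthogonal x y"
      using orthogonal by (simp add: orthogonal_def)
  qed
  moreover have "0 \<notin> v ` Ev"
    using v(1) by (metis imageE)
  ultimately have "finite (v ` Ev)"
    using pairwise_orthogonal_independent finiteI_independent by blast
  then show ?thesis
    using inj finite_imageD by (auto simp: Ev_def)
qed

section \<open>The largest eigenvalue of a Gram matrix\<close>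

definition gram_eigenvalues :: "nat \<Rightarrow> (nat \<Rightarrow> 'v::euclidean_space) \<Rightarrow> real set" where
  "gram_eigenvalues N U = {\<mu>. \<exists>x::nat \<Rightarrow> real. (\<exists>k<N. x k \<noteq> 0) \<and>
      (\<forall>i<N. (\<Sum>j<N. gram U i j * x j) = \<mu> * x i)}"

lemma sigma_max_eq_Max_gram_eigenvalues: "sigma_max N U = sqrt (Max (gram_eigenvalues N U))"
  by (simp add: sigma_max_def mat_lambda_max_def gram_eigenvalues_def)

lemma gram_eigenvector_combination:
  assumes "\<forall>i<N. (\<Sum>j<N. gram U i j * x j) = \<mu> * x i"
  shows "outer_sum N U U (\<Sum>j<N. x j *\<^sub>R U j) = \<mu> *\<^sub>R (\<Sum>j<N. x j *\<^sub>R U j)"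
    and "(norm (\<Sum>j<N. x j *\<^sub>R U j))\<^sup>2 = \<mu> * (\<Sum>j<N. (x j)\<^sup>2)"
proof -
  have ev: "U i \<bullet> (\<Sum>j<N. x j *\<^sub>R U j) = \<mu> * x i" if "i < N" for i
    using assms that by (simp add: gram_def inner_sum_right mult.commute)
  show "outer_sum N U U (\<Sum>j<N. x j *\<^sub>R U j) = \<mu> *\<^sub>R (\<Sum>j<N. x j *\<^sub>R U j)"
    by (simp add: outer_sum_def ev scaleR_sum_right)
  show "(norm (\<Sum>j<N. x j *\<^sub>R U j))\<^sup>2 = \<mu> * (\<Sum>j<N. (x j)\<^sup>2)"
    unfolding power2_norm_eq_inner
    by (simp add: inner_sum_left ev sum_distrib_left power2_eq_square mult_ac)
qed

lemma sum_sq_pos_if_nonzero: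
  fixes x :: "nat \<Rightarrow> real"
  assumes "\<exists>k<N. x k \<noteq> 0"
  shows "0 < (\<Sum>j<N. (x j)\<^sup>2)"
  using assms by (metis finite_lessThan lessThan_iff sum_pos2 zero_le_power2 zero_less_power2)

lemma finite_gram_eigenvalues: "finite (gram_eigenvalues N U)"
proof -
  have "gram_eigenvalues N U \<subseteq> insert 0 {\<mu>. \<exists>w. w \<noteq> 0 \<and> outer_sum N U U w = \<mu> *\<^sub>R w}"
  proof
    fix \<mu> assume "\<mu> \<in> gram_eigenvalues N U"
    then obtain x where x: "\<exists>k<N. x k \<noteq> 0" "\<forall>i<N. (\<Sum>j<N. gram U i j * x j) = \<mu> * x i"
      by (auto simp: gram_eigenvalues_def)
    show "\<mu> \<in> insert 0 {\<mu>. \<exists>w. w \<noteq> 0 \<and> outer_sum N U U w = \<mu> *\<^sub>R w}"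
    proof (cases "\<mu> = 0")
      case False
      then have "(\<Sum>j<N. x j *\<^sub>R U j) \<noteq> 0"
        using gram_eigenvector_combination(2)[OF x(2)] sum_sq_pos_if_nonzero[OF x(1)] by force
      with gram_eigenvector_combination(1)[OF x(2)] show ?thesis by blast
    qed simp
  qed
  moreover have "finite {\<mu>. \<exists>w. w \<noteq> 0 \<and> outer_sum N U U w = \<mu> *\<^sub>R w}"
    by (rule finite_eigenvalues_selfadjoint) (rule outer_sum_inner)
  ultimately show ?thesis
    using finite_subset by blast
qed

lemma gram_eigenvalue_le_tnorm:
  assumes "\<mu> \<in> gram_eigenvalues N U"
  shows "\<mu> \<le> (tnorm N U)\<^sup>2"
proof -
  obtain x where x: "\<exists>k<N. x k \<noteq> 0" "\<forall>i<N. (\<Sum>j<N. gram U i j * x j) = \<mu> * x i"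
    using assms by (auto simp: gram_eigenvalues_def)
  have "norm (\<Sum>j<N. x j *\<^sub>R U j) \<le> (\<Sum>j<N. \<bar>x j\<bar> * \<bar>norm (U j)\<bar>)"
    by (rule order_trans[OF norm_sum]) simp
  also have "\<dots> \<le> L2_set x {..<N} * tnorm N U"
    unfolding tnorm_eq_L2_set by (rule L2_set_mult_ineq)
  finally have "\<mu> * (\<Sum>j<N. (x j)\<^sup>2) \<le> (L2_set x {..<N} * tnorm N U)\<^sup>2"
    by (simp add: power_mono gram_eigenvector_combination(2)[OF x(2), symmetric])
  also have "\<dots> = (tnorm N U)\<^sup>2 * (\<Sum>j<N. (x j)\<^sup>2)"
    by (simp add: L2_set_def power_mult_distrib sum_nonneg)
  finally show ?thesis
    using sum_sq_pos_if_nonzero[OF x(1)] by simp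
qed

(* Maximality matters only for mu = 0: then it forces U = 0, whereas in general the eigenvalue 0
   of U U^T need not be an eigenvalue of U^T U. *)
lemma rayleigh_max_in_gram_eigenvalues:
  fixes U :: "nat \<Rightarrow> 'v::euclidean_space"
  assumes "0 < N" and le_max: "\<And>v. outer_sum N U U v \<bullet> v \<le> \<mu> * (v \<bullet> v)"
    and eigen: "outer_sum N U U w = \<mu> *\<^sub>R w" and "w \<noteq> 0"
  shows "\<mu> \<in> gram_eigenvalues N U"
proof (cases "\<mu> = 0")
  case True
  have "(\<Sum>i<N. (U i \<bullet> v)\<^sup>2) = 0" for v
    using le_max[of v] True by (simp add: outer_sum_self_inner antisym sum_nonneg)
  then have "U i \<bullet> v = 0" if "i < N" for i v
    using that by (simp add: sum_nonneg_eq_0_iff)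
  then have "gram U i j = 0" if "i < N" for i j
    using that by (simp add: gram_def)
  then show ?thesis
    using \<open>0 < N\<close> True by (auto simp: gram_eigenvalues_def intro!: exI[of _ "\<lambda>_. 1"])
next
  case False
  define x where "x i = U i \<bullet> w" for i
  have "(\<Sum>j<N. gram U i j * x j) = U i \<bullet> outer_sum N U U w" for i
    by (simp add: x_def gram_def outer_sum_def inner_sum_right mult.commute)
  then have "(\<Sum>j<N. gram U i j * x j) = \<mu> * x i" for i
    by (simp add: eigen x_def)
  moreover have "\<exists>k<N. x k \<noteq> 0"
  proof (rule ccontr)
    assume "\<not> (\<exists>k<N. x k \<noteq> 0)"
    then have "outer_sum N U U w = 0"
      by (simp add: outer_sum_def x_def)
    with eigen False \<open>w \<noteq> 0\<close> show False
      by simp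
  qed
  ultimately show ?thesis
    unfolding gram_eigenvalues_def by blast
qed

lemma synthesis_bound_sqrt_if_outer_sum_le:
  assumes "0 \<le> \<mu>" and le_max: "\<And>v. outer_sum N U U v \<bullet> v \<le> \<mu> * (v \<bullet> v)"
  shows "synthesis_bound N U (sqrt \<mu>)"
proof -
  have "L2_set (\<lambda>i. U i \<bullet> v) {..<N} \<le> sqrt \<mu> * norm v" for v
  proof -
    have "L2_set (\<lambda>i. U i \<bullet> v) {..<N} = sqrt (outer_sum N U U v \<bullet> v)"
      by (simp add: L2_set_def outer_sum_self_inner)
    also have "\<dots> \<le> sqrt (\<mu> * (norm v)\<^sup>2)"
      using le_max[of v] by (simp add: power2_norm_eq_inner)
    also have "\<dots> = sqrt \<mu> * norm v"
      by (simp add: real_sqrt_mult)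
    finally show ?thesis .
  qed
  then show ?thesis
    using \<open>0 \<le> \<mu>\<close> by (simp add: synthesis_bound_iff_analysis_bound)
qed

lemma exists_gram_eigenvalue_synthesis_bound:
  fixes U :: "nat \<Rightarrow> 'v::euclidean_space"
  assumes "0 < N"
  obtains \<mu> where "\<mu> \<in> gram_eigenvalues N U" "synthesis_bound N U (sqrt \<mu>)"
proof -
  obtain w where "norm w = 1" and le_max: "\<And>v. outer_sum N U U v \<bullet> v \<le> (outer_sum N U U w \<bullet> w) * (v \<bullet> v)"
    using exists_rayleigh_max[OF linear_outer_sum] by blast
  define \<mu> where "\<mu> = outer_sum N U U w \<bullet> w"
  have "outer_sum N U U w = \<mu> *\<^sub>R w"
    using \<open>norm w = 1\<close> le_max
    by (intro eigenvector_of_rayleigh_max[OF linear_outer_sum outer_sum_inner])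
      (simp_all add: \<mu>_def power2_norm_eq_inner[symmetric])
  moreover have "0 \<le> \<mu>"
    by (simp add: \<mu>_def outer_sum_self_inner sum_nonneg)
  ultimately show ?thesis
    using that rayleigh_max_in_gram_eigenvalues[OF \<open>0 < N\<close>] synthesis_bound_sqrt_if_outer_sum_le
      le_max \<open>norm w = 1\<close> by (fastforce simp: \<mu>_def)
qed

lemma synthesis_bound_sigma_max:
  fixes U :: "nat \<Rightarrow> 'v::euclidean_space"
  assumes "0 < N"
  shows "synthesis_bound N U (sigma_max N U)"
proof -
  obtain \<mu> where \<mu>: "\<mu> \<in> gram_eigenvalues N U" "synthesis_bound N U (sqrt \<mu>)"
    using exists_gram_eigenvalue_synthesis_bound[OF assms] by blast
  have "\<mu> \<le> Max (gram_eigenvalues N U)"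
    by (rule Max_ge[OF finite_gram_eigenvalues \<mu>(1)])
  then have "sqrt \<mu> \<le> sigma_max N U"
    by (simp add: sigma_max_eq_Max_gram_eigenvalues)
  with \<mu>(2) show ?thesis
    by (rule synthesis_bound_mono)
qed

lemma sigma_max_le_tnorm:
  fixes U :: "nat \<Rightarrow> 'v::euclidean_space"
  assumes "0 < N"
  shows "sigma_max N U \<le> tnorm N U"
proof -
  obtain \<mu> where "\<mu> \<in> gram_eigenvalues N U"
    using exists_gram_eigenvalue_synthesis_bound[OF assms] by blast
  then have "Max (gram_eigenvalues N U) \<in> gram_eigenvalues N U"
    using finite_gram_eigenvalues Max_in by blast
  then have "Max (gram_eigenvalues N U) \<le> (tnorm N U)\<^sup>2"
    by (rule gram_eigenvalue_le_tnorm)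
  then have "sqrt (Max (gram_eigenvalues N U)) \<le> sqrt ((tnorm N U)\<^sup>2)"
    by (rule real_sqrt_le_mono)
  then show ?thesis
    by (simp add: sigma_max_eq_Max_gram_eigenvalues tnorm_eq_L2_set)
qed

lemma one_le_sigma_max_orthonormal:
  fixes V :: "nat \<Rightarrow> 'v::euclidean_space"
  assumes "0 < N" "\<And>i j. i < N \<Longrightarrow> j < N \<Longrightarrow> V i \<bullet> V j = (if i = j then 1 else 0)"
  shows "1 \<le> sigma_max N V"
proof -
  have "1 \<in> gram_eigenvalues N V"
    using assms by (auto simp: gram_eigenvalues_def gram_def intro!: exI[of _ "\<lambda>_. 1"])
  then have "1 \<le> Max (gram_eigenvalues N V)"
    by (rule Max_ge[OF finite_gram_eigenvalues])
  then show ?thesis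
    by (simp add: sigma_max_eq_Max_gram_eigenvalues)
qed

lemma sigma_max_le_Sup_ball:
  fixes U V :: "nat \<Rightarrow> 'v::euclidean_space"
  assumes "0 < N" "tnorm N (\<lambda>k. U k - V k) \<le> r"
  shows "sigma_max N U \<le> Sup {sigma_max N W | W. tnorm N (\<lambda>k. W k - V k) \<le> r}"
proof (rule cSup_upper)
  show "bdd_above {sigma_max N W | W. tnorm N (\<lambda>k. W k - V k) \<le> r}"
  proof (rule bdd_aboveI, safe)
    fix W assume "tnorm N (\<lambda>k. W k - V k) \<le> r"
    moreover have "tnorm N W \<le> tnorm N (\<lambda>k. W k - V k) + tnorm N V"
      using tnorm_add_le[of N "\<lambda>k. W k - V k" V] by simp
    ultimately show "sigma_max N W \<le> r + tnorm N V"
      using sigma_max_le_tnorm[OF \<open>0 < N\<close>, of W] by linarith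
  qed
qed (use assms in blast)

section \<open>Lipschitz bounds for the operator A\<close>

context
  fixes H :: "'v::euclidean_space \<Rightarrow> 'v" and m :: real
  assumes linear_H: "linear H"
    and selfadjoint_H: "\<And>x y. H x \<bullet> y = x \<bullet> H y"
    and norm_H_le: "\<And>x. norm (H x) \<le> m * norm x"
    and m_nonneg: "0 \<le> m"
begin

lemma opA_eq_commutator: "opA H N U w = H (outer_sum N U U w) - outer_sum N U U (H w)"
  by (simp add: opA_def outer_sum_def sum_subtractf linear_sum[OF linear_H]
      linear_scale[OF linear_H] selfadjoint_H)

lemma linear_opA: "linear (opA H N U)"
proof -
  have "linear (\<lambda>w. H (outer_sum N U U w) - outer_sum N U U (H w))"
    using linear_compose[OF linear_outer_sum linear_H] linear_compose[OF linear_H linear_outer_sum]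
    by (intro linear_compose_sub) (simp_all add: o_def)
  then show ?thesis by (simp add: opA_eq_commutator[abs_def])
qed

lemma norm_opA_le:
  assumes "synthesis_bound N U s" "0 \<le> s"
  shows "norm (opA H N U x) \<le> 2 * m * s\<^sup>2 * norm x"
proof -
  note norm_S_le = norm_outer_sum_self_le[OF assms]
  have "norm (H (outer_sum N U U x)) \<le> m * norm (outer_sum N U U x)"
    by (rule norm_H_le)
  also have "\<dots> \<le> m * (s\<^sup>2 * norm x)"
    by (rule mult_left_mono[OF norm_S_le m_nonneg])
  finally have HS: "norm (H (outer_sum N U U x)) \<le> m * s\<^sup>2 * norm x"
    by (simp add: mult.assoc)
  have "norm (outer_sum N U U (H x)) \<le> s\<^sup>2 * norm (H x)"
    by (rule norm_S_le)
  also have "\<dots> \<le> s\<^sup>2 * (m * norm x)"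
    by (rule mult_left_mono[OF norm_H_le]) simp
  finally have SH: "norm (outer_sum N U U (H x)) \<le> m * s\<^sup>2 * norm x"
    by (simp add: mult_ac)
  have "norm (opA H N U x) \<le> norm (H (outer_sum N U U x)) + norm (outer_sum N U U (H x))"
    unfolding opA_eq_commutator by (rule norm_triangle_ineq4)
  with HS SH show ?thesis by linarith
qed

lemma hs_norm_opA_diff_le:
  assumes Ui: "synthesis_bound N Ui s" and Uj: "synthesis_bound N Uj s" and "0 \<le> s"
  shows "hs_norm (\<lambda>w. opA H N Ui w - opA H N Uj w) \<le> 4 * m * s * tnorm N (\<lambda>k. Ui k - Uj k)"
proof -
  define D where "D k = Ui k - Uj k" for k
  define E where "E w = outer_sum N Ui Ui w - outer_sum N Uj Uj w" for w
  have linear_E: "linear E"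
    unfolding E_def[abs_def] by (intro linear_compose_sub linear_outer_sum)
  have "E = (\<lambda>w. outer_sum N D Ui w + outer_sum N Uj D w)"
    by (simp add: E_def[abs_def] D_def[abs_def] outer_sum_diff)
  then have "hs_norm E \<le> hs_norm (outer_sum N D Ui) + hs_norm (outer_sum N Uj D)"
    using hs_norm_add_le by metis
  also have "\<dots> \<le> s * tnorm N D + s * tnorm N D"
    by (intro add_mono hs_norm_outer_sum_le[OF Ui \<open>0 \<le> s\<close>] hs_norm_outer_sum_le_swap[OF Uj \<open>0 \<le> s\<close>])
  finally have hs_E: "hs_norm E \<le> 2 * s * tnorm N D" by simp
  have "(\<lambda>w. opA H N Ui w - opA H N Uj w) = (\<lambda>w. H (E w) - E (H w))"
    unfolding opA_eq_commutator E_def linear_diff[OF linear_H] by (simp add: algebra_simps)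
  then have "hs_norm (\<lambda>w. opA H N Ui w - opA H N Uj w) \<le> hs_norm (\<lambda>w. H (E w)) + hs_norm (\<lambda>w. E (H w))"
    using hs_norm_diff_le by metis
  also have "\<dots> \<le> m * hs_norm E + m * hs_norm E"
    by (intro add_mono hs_norm_comp_left[OF norm_H_le m_nonneg]
        hs_norm_comp_right[OF linear_E linear_H selfadjoint_H norm_H_le m_nonneg])
  also have "\<dots> \<le> 4 * m * s * tnorm N D"
    using mult_left_mono[OF hs_E m_nonneg] by simp
  finally show ?thesis by (simp add: D_def[abs_def])
qed

lemma tnorm_opA_diff_le:
  assumes Ui: "synthesis_bound N Ui s" and Uj: "synthesis_bound N Uj s" and "0 \<le> s"
  shows "tnorm N (\<lambda>k. opA H N Ui (Ui k) - opA H N Uj (Uj k))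
    \<le> 6 * m * s\<^sup>2 * tnorm N (\<lambda>k. Ui k - Uj k)"
proof -
  define D where "D k = Ui k - Uj k" for k
  have "(\<lambda>k. opA H N Ui (Ui k) - opA H N Uj (Uj k))
      = (\<lambda>k. (opA H N Ui (Ui k) - opA H N Uj (Ui k)) + opA H N Uj (D k))"
    by (simp add: D_def linear_diff[OF linear_opA])
  then have "tnorm N (\<lambda>k. opA H N Ui (Ui k) - opA H N Uj (Uj k))
      \<le> tnorm N (\<lambda>k. opA H N Ui (Ui k) - opA H N Uj (Ui k)) + tnorm N (\<lambda>k. opA H N Uj (D k))"
    using tnorm_add_le by metis
  also have "\<dots> \<le> s * hs_norm (\<lambda>w. opA H N Ui w - opA H N Uj w) + 2 * m * s\<^sup>2 * tnorm N D"
    using norm_opA_le[OF Uj \<open>0 \<le> s\<close>] m_nonneg \<open>0 \<le> s\<close>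
    by (intro add_mono tnorm_map_le_hs_norm[OF linear_compose_sub[OF linear_opA linear_opA] Ui]
        tnorm_map_le) simp_all
  also have "\<dots> \<le> s * (4 * m * s * tnorm N D) + 2 * m * s\<^sup>2 * tnorm N D"
    using hs_norm_opA_diff_le[OF Ui Uj \<open>0 \<le> s\<close>] \<open>0 \<le> s\<close>
    by (simp add: D_def[abs_def] mult_left_mono)
  finally show ?thesis by (simp add: D_def[abs_def] power2_eq_square algebra_simps)
qed

end

theorem lemma4p4:
  fixes H :: "'v::euclidean_space \<Rightarrow> 'v"
    and lam :: "nat \<Rightarrow> real" and e :: "nat \<Rightarrow> 'v"
    and N :: nat and Vs :: "nat \<Rightarrow> 'v"
    and eta_a eta_b r \<alpha> L Lhat :: real
  assumes lin: "linear H"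
    and selfadj: "\<And>x y. H x \<bullet> y = x \<bullet> H y"
    and eig_basis: "\<And>i j. i < DIM('v) \<Longrightarrow> j < DIM('v) \<Longrightarrow> e i \<bullet> e j = (if i = j then 1 else 0)"
    and eig_eq: "\<And>i. i < DIM('v) \<Longrightarrow> H (e i) = lam i *\<^sub>R e i"
    and sorted: "\<And>i j. i \<le> j \<Longrightarrow> j < DIM('v) \<Longrightarrow> lam i \<le> lam j"
    and lam1_neg: "lam 0 < 0"
    and N_pos: "0 < N" and N_lt: "N < DIM('v)"
    and gap: "lam (N - 1) < lam N"
    and Vs_orth: "\<And>i j. i < N \<Longrightarrow> j < N \<Longrightarrow> Vs i \<bullet> Vs j = (if i = j then 1 else 0)"
    and Vs_eig: "\<And>i. i < N \<Longrightarrow> H (Vs i) = lam i *\<^sub>R Vs i"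
    and eta_a_pos: "0 < eta_a" and eta_b_pos: "0 < eta_b"
    and r_def: "r = max eta_a eta_b"
    and alpha_def: "\<alpha> = Sup {sigma_max N U | U. tnorm N (\<lambda>k. U k - Vs k) \<le> r}"
    and L_def: "L = 6 * \<alpha>\<^sup>2 * max \<bar>lam 0\<bar> \<bar>lam (DIM('v) - 1)\<bar>"
    and Lhat_def: "Lhat = 2 * L / (3 * \<alpha>)"
  shows "\<forall>Ui Uj. tnorm N (\<lambda>k. Ui k - Vs k) \<le> r \<longrightarrow> tnorm N (\<lambda>k. Uj k - Vs k) \<le> r \<longrightarrow>
           tnorm N (\<lambda>k. opA H N Ui (Ui k) - opA H N Uj (Uj k)) \<le> L * tnorm N (\<lambda>k. Ui k - Uj k) \<and>
           hs_norm (\<lambda>w. opA H N Ui w - opA H N Uj w) \<le> Lhat * tnorm N (\<lambda>k. Ui k - Uj k)"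
proof -
  define M where "M = max \<bar>lam 0\<bar> \<bar>lam (DIM('v) - 1)\<bar>"
  have norm_H_le: "norm (H x) \<le> M * norm x" for x
    unfolding M_def by (rule norm_le_max_abs_extreme_eigenvalue[OF eig_basis selfadj eig_eq sorted])
  have "0 \<le> M"
    by (simp add: M_def)
  have sigma_le_alpha: "sigma_max N U \<le> \<alpha>" if "tnorm N (\<lambda>k. U k - Vs k) \<le> r" for U
    unfolding alpha_def by (rule sigma_max_le_Sup_ball[OF N_pos that])
  have "tnorm N (\<lambda>k. Vs k - Vs k) \<le> r"
    using eta_a_pos by (simp add: r_def tnorm_def)
  then have "1 \<le> \<alpha>"
    using one_le_sigma_max_orthonormal[OF N_pos Vs_orth] sigma_le_alpha by fastforce
  have bound: "synthesis_bound N U \<alpha>" if "tnorm N (\<lambda>k. U k - Vs k) \<le> r" for U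
    using synthesis_bound_sigma_max[OF N_pos] sigma_le_alpha[OF that] by (rule synthesis_bound_mono)
  (* Lhat = 2 L / (3 alpha) equals 4 M alpha only because alpha is at least sigma_max N Vs = 1. *)
  have "L = 6 * M * \<alpha>\<^sup>2" and "Lhat = 4 * M * \<alpha>"
    using \<open>1 \<le> \<alpha>\<close> by (simp_all add: L_def Lhat_def M_def power2_eq_square)
  then show ?thesis
    using tnorm_opA_diff_le[OF lin selfadj norm_H_le \<open>0 \<le> M\<close> bound bound]
      hs_norm_opA_diff_le[OF lin selfadj norm_H_le \<open>0 \<le> M\<close> bound bound] \<open>1 \<le> \<alpha>\<close>
    by simp
qed

end
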